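(* Let $q$ be a prime power, $m$ a positive integer, $n=q^m-1$, and $\delta$ an integer with $2\le\delta\le q^{\lceil m/2\rceil}+1$ (and $\delta\le n$). Suppose $$\sum_{i=0}^{\lfloor(\delta+1)/2\rfloor}\binom{q^m-1}{i}(q-1)^i> q^{m\lceil(\delta-1)(1-1/q)\rceil}.$$ Then the minimum distance $d$ of $\mathcal{BCH}(n,q;\delta)$ satisfies $d\in\{\delta,\delta+1\}$. If moreover $\delta\equiv0\pmod q$, then $d=\delta+1$.
   Context: Let $\alpha$ be a primitive element of $\mathbf{F}_{q^m}$ and $n=q^m-1$; $C_x=\{xq^k\bmod n\mid k\in\mathbf{Z}\}$. For $2\le\delta\le n$, $\mathcal{BCH}(n,q;\delta)$ is the cyclic code of length $n$ over $\mathbf{F}_q$ with generator polynomial $\prod_{z\in Z}(x-\alpha^z)$, where $Z=C_1\cup\cdots\cup C_{\delta-1}$. *)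

theory Defs
  imports "HOL-Number_Theory.Number_Theory" "HOL-Computational_Algebra.Polynomial"
begin

text \<open>Cyclotomic coset C_x = { x q^k mod n | k }.  Since gcd(q,n)=1, q has finite
  multiplicative order mod n, so ranging k over nat gives the same set as k over Z.\<close>
definition cyc_coset :: "nat \<Rightarrow> nat \<Rightarrow> nat \<Rightarrow> nat set" where
  "cyc_coset q n x = {x * q ^ k mod n | k. True}"

definition primitive_elem :: "'b::field \<Rightarrow> bool" where
  "primitive_elem a \<longleftrightarrow> (\<forall>x. x \<noteq> 0 \<longrightarrow> (\<exists>k::nat. x = a ^ k))"

definition bch_defset :: "nat \<Rightarrow> nat \<Rightarrow> nat \<Rightarrow> nat set" where
  "bch_defset q n \<delta> = (\<Union>x\<in>{1..\<delta>-1}. cyc_coset q n x)"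

definition bch_gen :: "nat \<Rightarrow> nat \<Rightarrow> 'b::field \<Rightarrow> nat \<Rightarrow> 'b poly" where
  "bch_gen q n \<alpha> \<delta> = (\<Prod>z\<in>bch_defset q n \<delta>. [:- (\<alpha> ^ z), 1:])"

text \<open>The cyclic code of length n over F_q (realised as the subfield {x. x^q = x} of
  the ambient field F_(q^m)) with the given generator polynomial: all polynomials of
  degree < n with coefficients in F_q that are multiples of the generator.\<close>
definition bch_code :: "nat \<Rightarrow> nat \<Rightarrow> 'b::field \<Rightarrow> nat \<Rightarrow> 'b poly set" where
  "bch_code q n \<alpha> \<delta> = {c. degree c < n \<and> (\<forall>i. coeff c i ^ q = coeff c i)
                              \<and> bch_gen q n \<alpha> \<delta> dvd c}"

definition hweight :: "'b::zero poly \<Rightarrow> nat" where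
  "hweight c = card {i. coeff c i \<noteq> 0}"

definition min_dist :: "'b::zero poly set \<Rightarrow> nat" where
  "min_dist C = (LEAST w. \<exists>c\<in>C. c \<noteq> 0 \<and> hweight c = w)"

end

theory Submission
  imports Defs
begin

text \<open>
  Lower bound: the defining set Z contains 1, ..., delta - 1, and also delta when q divides delta
  (delta lies in the cyclotomic coset of delta / q), so the BCH bound gives d >= delta, resp.
  d >= delta + 1.

  Upper bound: Z is covered by the cosets C_y with y < delta not divisible by q, each of size at
  most m, so |Z| <= m * ceil((delta - 1)(1 - 1/q)), and the code, an F_q-linear code of length n,
  has at least q^(n - |Z|) words.  If all nonzero weights exceeded delta + 1 >= 2t, where
  t = floor((delta + 1) / 2), the Hamming balls of radius t around the codewords would be
  disjoint, so q^(n - |Z|) * V <= q^n for the ball volume V = sum_(i<=t) C(n,i) (q-1)^i,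
  contradicting V > q^(m * ceil((delta - 1)(1 - 1/q))).
\<close>

section \<open>The Frobenius map\<close>

lemma frobenius_diff:
  fixes x y :: "'b::comm_ring_1"
  assumes "prime CHAR('b)" and "q = CHAR('b) ^ k"
  shows "(x - y) ^ q = x ^ q - y ^ q"
  using freshmans_dream'[OF assms, of "x - y" y] by simp

lemma map_poly_frobenius_linear:
  fixes a :: "'b::comm_ring_1"
  assumes "prime CHAR('b)" and "q = CHAR('b) ^ k"
  shows "map_poly (\<lambda>x. x ^ q) [:- a, 1:] = [:- (a ^ q), 1:]"
proof -
  have "q > 0" using assms prime_gt_0_nat by simp
  then have "(- a) ^ q = - (a ^ q)"
    using frobenius_diff[OF assms, of 0 a] by (simp add: power_0_left)
  with \<open>q > 0\<close> show ?thesis by (simp add: map_poly_pCons power_0_left)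
qed

lemma map_poly_frobenius_mult:
  fixes a b :: "'b::comm_ring_1 poly"
  assumes "prime CHAR('b)" and "q = CHAR('b) ^ k"
  shows "map_poly (\<lambda>x. x ^ q) (a * b) = map_poly (\<lambda>x. x ^ q) a * map_poly (\<lambda>x. x ^ q) b"
proof -
  have "(\<lambda>x::'b. x ^ q) 0 = 0" using assms prime_gt_0_nat by (simp add: power_0_left)
  then show ?thesis
    by (intro poly_eqI)
      (simp add: coeff_map_poly coeff_mult freshmans_dream_sum'[OF assms] power_mult_distrib)
qed

lemma map_poly_frobenius_prod:
  fixes f :: "'a \<Rightarrow> 'b::comm_ring_1 poly"
  assumes "prime CHAR('b)" and "q = CHAR('b) ^ k"
  shows "map_poly (\<lambda>x. x ^ q) (\<Prod>a\<in>A. f a) = (\<Prod>a\<in>A. map_poly (\<lambda>x. x ^ q) (f a))"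
  by (induction A rule: infinite_finite_induct) (simp_all add: map_poly_frobenius_mult[OF assms])

lemma map_poly_power_eq_self_iff:
  fixes p :: "'b::comm_ring_1 poly"
  assumes "q > 0"
  shows "map_poly (\<lambda>x. x ^ q) p = p \<longleftrightarrow> (\<forall>i. coeff p i ^ q = coeff p i)"
proof -
  have "(\<lambda>x::'b. x ^ q) 0 = 0" using assms by (simp add: power_0_left)
  then show ?thesis by (auto simp: poly_eq_iff coeff_map_poly)
qed

lemma frobenius_fixed_coeff_mult:
  fixes a b :: "'b::comm_ring_1 poly"
  assumes "prime CHAR('b)" and "q = CHAR('b) ^ k"
    and "\<forall>i. coeff a i ^ q = coeff a i" and "\<forall>i. coeff b i ^ q = coeff b i"
  shows "\<forall>i. coeff (a * b) i ^ q = coeff (a * b) i"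
proof -
  have "q > 0" using assms prime_gt_0_nat by simp
  then show ?thesis using assms
    by (simp add: map_poly_frobenius_mult flip: map_poly_power_eq_self_iff)
qed

section \<open>Finite fields with a primitive element\<close>

lemma power_mod_exponent:
  fixes x :: "'a::monoid_mult"
  assumes "x ^ n = 1"
  shows "x ^ (k mod n) = x ^ k"
proof -
  have "x ^ k = x ^ (n * (k div n) + k mod n)" by simp
  also have "\<dots> = (x ^ n) ^ (k div n) * x ^ (k mod n)" by (simp only: power_add power_mult)
  finally show ?thesis using assms by simp
qed

lemma field_power_card_pred:
  fixes x :: "'b::{field,finite}"
  assumes "x \<noteq> 0"
  shows "x ^ (card (UNIV :: 'b set) - 1) = 1"
proof -
  have card_nonzero: "card (UNIV - {0 :: 'b}) = card (UNIV :: 'b set) - 1"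
    by (simp add: card_Diff_singleton)
  have "(\<Prod>y\<in>UNIV - {0}. x * y) = (\<Prod>y\<in>UNIV - {0 :: 'b}. y)"
    by (rule prod.reindex_bij_witness[of _ "\<lambda>y. y / x" "\<lambda>y. x * y"]) (use assms in auto)
  then have "x ^ (card (UNIV :: 'b set) - 1) * (\<Prod>y\<in>UNIV - {0 :: 'b}. y)
      = 1 * (\<Prod>y\<in>UNIV - {0 :: 'b}. y)"
    by (simp add: prod.distrib card_nonzero)
  moreover have "(\<Prod>y\<in>UNIV - {0 :: 'b}. y) \<noteq> 0" by simp
  ultimately show ?thesis by (rule mult_right_cancel[THEN iffD1, rotated])
qed

lemma two_le_card_field: "2 \<le> card (UNIV :: 'b::{field,finite} set)"
  using card_mono[of UNIV "{0, 1 :: 'b}"] by simp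

lemma primitive_elem_nonzero:
  fixes \<alpha> :: "'b::{field,finite}"
  assumes "primitive_elem \<alpha>" and "2 < card (UNIV :: 'b set)"
  shows "\<alpha> \<noteq> 0"
proof
  assume "\<alpha> = 0"
  then have "x = \<alpha> ^ k \<Longrightarrow> x \<in> {0, 1}" for x :: 'b and k by (cases k) auto
  then have "UNIV \<subseteq> {0, 1 :: 'b}" using assms(1) unfolding primitive_elem_def by blast
  then have "card (UNIV :: 'b set) \<le> card {0, 1 :: 'b}" by (intro card_mono) auto
  with assms(2) show False by simp
qed

lemma inj_on_primitive_elem_powers:
  fixes \<alpha> :: "'b::{field,finite}"
  assumes "primitive_elem \<alpha>" and "\<alpha> \<noteq> 0"
  shows "inj_on (\<lambda>i. \<alpha> ^ i) {..<card (UNIV :: 'b set) - 1}"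
proof (rule eq_card_imp_inj_on)
  let ?N = "card (UNIV :: 'b set) - 1"
  have N_pos: "?N > 0" using two_le_card_field[where 'b='b] by simp
  have "(\<lambda>i. \<alpha> ^ i) ` {..<?N} = UNIV - {0}"
  proof
    show "(\<lambda>i. \<alpha> ^ i) ` {..<?N} \<subseteq> UNIV - {0}" using assms(2) by auto
    show "UNIV - {0} \<subseteq> (\<lambda>i. \<alpha> ^ i) ` {..<?N}"
    proof
      fix x assume "x \<in> UNIV - {0 :: 'b}"
      then obtain k where "x = \<alpha> ^ k" using assms(1) unfolding primitive_elem_def by blast
      then have "x = \<alpha> ^ (k mod ?N)"
        using power_mod_exponent[OF field_power_card_pred[OF assms(2)]] by simp
      then show "x \<in> (\<lambda>i. \<alpha> ^ i) ` {..<?N}" using N_pos by auto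
    qed
  qed
  then show "card ((\<lambda>i. \<alpha> ^ i) ` {..<?N}) = card {..<?N}" by (simp add: card_Diff_singleton)
qed simp

lemma card_frobenius_fixed:
  fixes \<alpha> :: "'b::{field,finite}"
  assumes "primitive_elem \<alpha>" and "\<alpha> \<noteq> 0" and "2 \<le> q"
    and "(q - 1) dvd (card (UNIV :: 'b set) - 1)"
  shows "card {x :: 'b. x ^ q = x} = q"
proof (rule antisym)
  define P :: "'b poly" where "P = monom 1 q + [:0, -1:]"
  have "degree P = q" unfolding P_def using assms(3)
    by (subst degree_add_eq_left) (auto simp: degree_monom_eq)
  then have "P \<noteq> 0" using assms(3) by auto
  have "{x :: 'b. x ^ q = x} = {x. poly P x = 0}" unfolding P_def by (auto simp: poly_monom)
  then show "card {x :: 'b. x ^ q = x} \<le> q"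
    using card_poly_roots_bound[OF \<open>P \<noteq> 0\<close>] \<open>degree P = q\<close> by simp
next
  let ?N = "card (UNIV :: 'b set) - 1"
  obtain M where M: "?N = (q - 1) * M" using assms(4) by blast
  have "?N > 0" using two_le_card_field[where 'b='b] by simp
  then have "M > 0" using M by (intro Nat.gr0I) simp
  have inj: "inj_on (\<lambda>j. \<alpha> ^ (j * M)) {..<q - 1}"
  proof (rule inj_onI)
    fix i j assume ij: "i \<in> {..<q - 1}" "j \<in> {..<q - 1}" "\<alpha> ^ (i * M) = \<alpha> ^ (j * M)"
    have "i * M < ?N" "j * M < ?N"
      unfolding M using ij(1,2) \<open>M > 0\<close> by (simp_all add: mult_less_mono1)
    then have "i * M = j * M"
      using inj_on_primitive_elem_powers[OF assms(1,2)] ij(3) unfolding inj_on_def by blast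
    then show "i = j" using \<open>M > 0\<close> by simp
  qed
  have "\<alpha> ^ (j * M) \<in> {x. x ^ q = x}" for j
  proof -
    have "j * M * q = j * M + ?N * j"
      unfolding M using assms(3) by (cases q) (simp_all add: algebra_simps)
    then have "(\<alpha> ^ (j * M)) ^ q = \<alpha> ^ (j * M) * (\<alpha> ^ ?N) ^ j"
      by (simp only: power_add flip: power_mult)
    then show ?thesis using field_power_card_pred[OF assms(2)] by simp
  qed
  then have sub: "insert 0 ((\<lambda>j. \<alpha> ^ (j * M)) ` {..<q - 1}) \<subseteq> {x. x ^ q = x}"
    using assms(3) by auto
  have "card (insert 0 ((\<lambda>j. \<alpha> ^ (j * M)) ` {..<q - 1})) = q"
    using inj assms(2,3) by (subst card_insert_disjoint) (auto simp: card_image)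
  then show "q \<le> card {x :: 'b. x ^ q = x}" using card_mono[OF _ sub] by simp
qed

section \<open>Words and Hamming weight\<close>

definition poly_words :: "'a::zero set \<Rightarrow> nat \<Rightarrow> 'a poly set" where
  "poly_words F k = {p. (\<forall>i. coeff p i \<in> F) \<and> (\<forall>i\<ge>k. coeff p i = 0)}"

lemma poly_words_0: "0 \<in> F \<Longrightarrow> poly_words F 0 = {0}"
  unfolding poly_words_def by (auto intro: poly_eqI)

lemma poly_words_Suc:
  "poly_words F (Suc k) = (\<lambda>(a, p). pCons a p) ` (F \<times> poly_words F k)"
proof (intro Set.set_eqI iffI)
  fix p assume p: "p \<in> poly_words F (Suc k)"
  obtain a r where "p = pCons a r" by (cases p)
  moreover have "a \<in> F" "r \<in> poly_words F k"
    using p unfolding poly_words_def \<open>p = pCons a r\<close>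
    by (auto dest: spec[of _ 0] spec[of _ "Suc i" for i])
  ultimately show "p \<in> (\<lambda>(a, p). pCons a p) ` (F \<times> poly_words F k)" by auto
next
  fix p assume "p \<in> (\<lambda>(a, p). pCons a p) ` (F \<times> poly_words F k)"
  then show "p \<in> poly_words F (Suc k)"
    unfolding poly_words_def by (auto simp: coeff_pCons split: nat.split)
qed

lemma card_poly_words:
  assumes "0 \<in> F"
  shows "card (poly_words F k) = card F ^ k"
proof (induction k)
  case 0
  then show ?case using assms by (simp add: poly_words_0)
next
  case (Suc k)
  have "inj_on (\<lambda>(a, p). pCons a p) (F \<times> poly_words F k)" by (auto simp: inj_on_def)
  then show ?case by (simp add: poly_words_Suc card_image card_cartesian_product Suc.IH)
qed

lemma finite_poly_words:
  assumes "finite F" and "0 \<in> F"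
  shows "finite (poly_words F k)"
proof (rule card_ge_0_finite)
  have "card F > 0" using assms by (auto simp: card_gt_0_iff)
  then show "card (poly_words F k) > 0" by (simp add: card_poly_words assms(2))
qed

lemma poly_words_degree_less:
  assumes "p \<in> poly_words F k" and "p \<noteq> 0"
  shows "degree p < k"
proof (rule ccontr)
  assume "\<not> degree p < k"
  then have "coeff p (degree p) = 0" using assms(1) unfolding poly_words_def by simp
  with assms(2) show False by simp
qed

lemma finite_coeff_support: "finite {i. coeff p i \<noteq> 0}"
  by (rule finite_subset[of _ "{..degree p}"]) (auto intro: le_degree)

lemma hweight_0 [simp]: "hweight 0 = 0"
  unfolding hweight_def by simp

lemma hweight_pCons: "hweight (pCons a p) = hweight p + (if a = 0 then 0 else 1)"
proof -
  have support: "{i. coeff (pCons a p) i \<noteq> 0}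
      = (if a = 0 then {} else {0}) \<union> Suc ` {i. coeff p i \<noteq> 0}"
  proof (rule Set.set_eqI)
    show "i \<in> {i. coeff (pCons a p) i \<noteq> 0} \<longleftrightarrow>
        i \<in> (if a = 0 then {} else {0}) \<union> Suc ` {i. coeff p i \<noteq> 0}" for i
      by (cases i) auto
  qed
  show ?thesis
    unfolding hweight_def support
    by (subst card_Un_disjoint) (auto simp: finite_coeff_support card_image)
qed

lemma hweight_diff_le: "hweight (a - b) \<le> hweight a + hweight (b :: 'a::ab_group_add poly)"
proof -
  have "hweight (a - b) \<le> card ({i. coeff a i \<noteq> 0} \<union> {i. coeff b i \<noteq> 0})"
    unfolding hweight_def by (intro card_mono) (auto simp: finite_coeff_support)
  also have "\<dots> \<le> hweight a + hweight b" unfolding hweight_def by (rule card_Un_le)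
  finally show ?thesis .
qed

lemma card_poly_words_hweight_eq:
  assumes "finite F" and "0 \<in> F"
  shows "card {p \<in> poly_words F k. hweight p = i} = (k choose i) * (card F - 1) ^ i"
proof (induction k arbitrary: i)
  case 0
  have "{p \<in> poly_words F 0. hweight p = i} = (if i = 0 then {0} else {})"
    using assms(2) by (auto simp: poly_words_0)
  then show ?case by simp
next
  case (Suc k)
  define W where "W j = {p \<in> poly_words F k. hweight p = j}" for j
  have fin_W: "finite (W j)" for j unfolding W_def using finite_poly_words[OF assms] by simp
  define A where "A = pCons 0 ` W i"
  define B where
    "B = (\<lambda>(a, p). pCons a p) ` ((F - {0}) \<times> {p \<in> poly_words F k. Suc (hweight p) = i})"
  have split: "{p \<in> poly_words F (Suc k). hweight p = i} = A \<union> B"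
    unfolding A_def B_def W_def poly_words_Suc
    using assms(2) by (auto simp: hweight_pCons image_iff split: if_splits)
  have card_A: "card A = (k choose i) * (card F - 1) ^ i"
    unfolding A_def by (subst card_image) (auto simp: inj_on_def Suc.IH W_def)
  have card_B: "card B = (card F - 1) * card {p \<in> poly_words F k. Suc (hweight p) = i}"
    unfolding B_def using assms
    by (subst card_image) (auto simp: inj_on_def card_cartesian_product card_Diff_singleton)
  show ?case
  proof (cases i)
    case 0
    then have "B = {}" unfolding B_def by auto
    with split card_A show ?thesis by (simp add: \<open>i = 0\<close>)
  next
    case (Suc j)
    then have "card B = (k choose j) * (card F - 1) ^ Suc j"
      using card_B Suc.IH[of j] by (simp add: W_def)
    moreover have "A \<inter> B = {}" unfolding A_def B_def by auto
    moreover have "finite A" "finite B"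
      unfolding A_def B_def using fin_W finite_poly_words[OF assms] assms(1) by (auto simp: W_def)
    ultimately show ?thesis
      using split card_A Suc by (simp add: card_Un_disjoint add_mult_distrib)
  qed
qed

lemma card_poly_words_hweight_le:
  assumes "finite F" and "0 \<in> F"
  shows "card {p \<in> poly_words F k. hweight p \<le> t} = (\<Sum>i=0..t. (k choose i) * (card F - 1) ^ i)"
proof -
  have "{p \<in> poly_words F k. hweight p \<le> t} = (\<Union>i\<in>{0..t}. {p \<in> poly_words F k. hweight p = i})"
    by auto
  also have "card \<dots> = (\<Sum>i=0..t. card {p \<in> poly_words F k. hweight p = i})"
    using finite_poly_words[OF assms] by (subst card_UN_disjoint) auto
  finally show ?thesis by (simp add: card_poly_words_hweight_eq[OF assms])
qed

lemma hamming_bound: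
  fixes C :: "'a::ab_group_add poly set"
  assumes "finite F" and "0 \<in> F" and "\<And>x y. x \<in> F \<Longrightarrow> y \<in> F \<Longrightarrow> x + y \<in> F"
    and "C \<subseteq> poly_words F n"
    and "\<And>c c'. c \<in> C \<Longrightarrow> c' \<in> C \<Longrightarrow> c \<noteq> c' \<Longrightarrow> 2 * t < hweight (c - c')"
  shows "card C * card {e \<in> poly_words F n. hweight e \<le> t} \<le> card F ^ n"
proof -
  define B where "B = {e \<in> poly_words F n. hweight e \<le> t}"
  have "inj_on (\<lambda>(c, e). c + e) (C \<times> B)"
  proof (rule inj_onI, clarify)
    fix c e c' e' assume ce: "c \<in> C" "e \<in> B" "c' \<in> C" "e' \<in> B" "c + e = c' + e'"
    then have "c - c' = e' - e" by (simp add: algebra_simps diff_eq_eq)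
    then have "hweight (c - c') \<le> 2 * t"
      using hweight_diff_le[of e' e] ce(2,4) unfolding B_def by simp
    then show "c = c' \<and> e = e'" using assms(5)[OF ce(1,3)] ce(5) by force
  qed
  moreover have "(\<lambda>(c, e). c + e) ` (C \<times> B) \<subseteq> poly_words F n"
    using assms(3,4) unfolding B_def poly_words_def by auto
  ultimately have "card (C \<times> B) \<le> card (poly_words F n)"
    using card_inj_on_le finite_poly_words[OF assms(1,2)] by blast
  then show ?thesis unfolding B_def by (simp add: card_cartesian_product card_poly_words assms(2))
qed

section \<open>The BCH bound\<close>

lemma sum_coeff_times_poly_at_powers:
  fixes c L :: "'a::comm_semiring_1 poly"
  shows "(\<Sum>i\<le>degree c. coeff c i * \<beta> ^ i * poly L (\<beta> ^ i))
       = (\<Sum>k\<le>degree L. coeff L k * poly c (\<beta> ^ Suc k))"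
proof -
  have "(\<Sum>i\<le>degree c. coeff c i * \<beta> ^ i * poly L (\<beta> ^ i))
      = (\<Sum>i\<le>degree c. \<Sum>k\<le>degree L. coeff L k * (coeff c i * (\<beta> ^ Suc k) ^ i))"
  proof (rule sum.cong[OF refl])
    fix i
    have "\<beta> ^ i * (\<beta> ^ i) ^ k = (\<beta> ^ Suc k) ^ i" for k
      by (metis power_Suc power_mult mult.commute)
    then show "coeff c i * \<beta> ^ i * poly L (\<beta> ^ i)
        = (\<Sum>k\<le>degree L. coeff L k * (coeff c i * (\<beta> ^ Suc k) ^ i))"
      by (simp add: poly_altdef sum_distrib_left mult.left_commute mult.assoc)
  qed
  also have "\<dots> = (\<Sum>k\<le>degree L. coeff L k * poly c (\<beta> ^ Suc k))"
    by (subst sum.swap) (simp add: poly_altdef sum_distrib_left)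
  finally show ?thesis .
qed

lemma bch_bound:
  fixes c :: "'a::idom poly"
  assumes "c \<noteq> 0" and "\<beta> \<noteq> 0" and inj: "inj_on (\<lambda>i. \<beta> ^ i) {i. coeff c i \<noteq> 0}"
    and roots: "\<And>j. j \<in> {1..w} \<Longrightarrow> poly c (\<beta> ^ j) = 0"
  shows "w < hweight c"
proof (rule ccontr)
  assume "\<not> w < hweight c"
  define S where "S = {i. coeff c i \<noteq> 0}"
  define s where "s = degree c"
  have "finite S" unfolding S_def by (rule finite_coeff_support)
  have "s \<in> S" unfolding S_def s_def using \<open>c \<noteq> 0\<close> by simp
  have "card S \<le> w" using \<open>\<not> w < hweight c\<close> unfolding S_def hweight_def by simp
  \<comment> \<open>Since degree L < w, the sum over i of c_i beta^i L(beta^i) is a combination of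
    c(beta), ..., c(beta^w), hence zero; but L kills every term except the one at s.\<close>
  define L where "L = (\<Prod>s'\<in>S - {s}. [:- (\<beta> ^ s'), 1:])"
  have "degree L \<le> card (S - {s})"
    unfolding L_def using degree_prod_sum_le[of "S - {s}" "\<lambda>s'. [:- (\<beta> ^ s'), 1:]"] \<open>finite S\<close>
    by (simp add: o_def)
  also have "card (S - {s}) < card S" using \<open>finite S\<close> \<open>s \<in> S\<close> by (rule card_Diff1_less)
  finally have "Suc (degree L) \<le> w" using \<open>card S \<le> w\<close> by simp
  then have "poly c (\<beta> ^ Suc k) = 0" if "k \<le> degree L" for k
    using roots[of "Suc k"] that by simp
  then have "(\<Sum>k\<le>degree L. coeff L k * poly c (\<beta> ^ Suc k)) = 0" by simp
  then have "(\<Sum>i\<le>degree c. coeff c i * \<beta> ^ i * poly L (\<beta> ^ i)) = 0"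
    by (simp add: sum_coeff_times_poly_at_powers)
  moreover have "(\<Sum>i\<le>degree c. coeff c i * \<beta> ^ i * poly L (\<beta> ^ i))
      = coeff c s * \<beta> ^ s * poly L (\<beta> ^ s)"
  proof -
    have "poly L (\<beta> ^ i) = 0" if "i \<in> S - {s}" for i
      using that \<open>finite S\<close> unfolding L_def poly_prod by (auto simp: prod_zero_iff)
    then have "(\<Sum>i\<le>degree c. coeff c i * \<beta> ^ i * poly L (\<beta> ^ i))
        = (\<Sum>i\<in>{s}. coeff c i * \<beta> ^ i * poly L (\<beta> ^ i))"
      by (intro sum.mono_neutral_right) (auto simp: S_def s_def)
    then show ?thesis by simp
  qed
  moreover have "poly L (\<beta> ^ s) \<noteq> 0"
    using inj \<open>s \<in> S\<close> \<open>finite S\<close> unfolding L_def S_def poly_prod inj_on_def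
    by (auto simp: prod_zero_iff)
  ultimately show False using \<open>s \<in> S\<close> \<open>\<beta> \<noteq> 0\<close> unfolding S_def by simp
qed

section \<open>Cyclotomic cosets and the defining set\<close>

lemma cyc_coset_subset_lessThan: "n > 0 \<Longrightarrow> cyc_coset q n x \<subseteq> {..<n}"
  unfolding cyc_coset_def by auto

lemma bch_defset_subset_lessThan: "n > 0 \<Longrightarrow> bch_defset q n \<delta> \<subseteq> {..<n}"
  unfolding bch_defset_def using cyc_coset_subset_lessThan by blast

lemma finite_bch_defset: "n > 0 \<Longrightarrow> finite (bch_defset q n \<delta>)"
  by (meson bch_defset_subset_lessThan finite_lessThan finite_subset)

lemma card_cyc_coset_le:
  assumes "[q ^ m = 1] (mod n)" and "m > 0"
  shows "card (cyc_coset q n x) \<le> m"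
proof -
  have "cyc_coset q n x \<subseteq> (\<lambda>k. x * q ^ k mod n) ` {..<m}"
  proof
    fix y assume "y \<in> cyc_coset q n x"
    then obtain k where y: "y = x * q ^ k mod n" unfolding cyc_coset_def by auto
    have "q ^ k = q ^ (m * (k div m) + k mod m)" by simp
    then have "[q ^ k = (q ^ m) ^ (k div m) * q ^ (k mod m)] (mod n)"
      by (simp only: power_add power_mult cong_refl)
    also have "[(q ^ m) ^ (k div m) * q ^ (k mod m) = 1 ^ (k div m) * q ^ (k mod m)] (mod n)"
      by (intro cong_mult cong_pow assms(1) cong_refl)
    finally have "[x * q ^ k = x * q ^ (k mod m)] (mod n)" by (intro cong_mult cong_refl) simp
    then have "y = x * q ^ (k mod m) mod n" unfolding y cong_def .
    then show "y \<in> (\<lambda>k. x * q ^ k mod n) ` {..<m}" using assms(2) by auto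
  qed
  then have "card (cyc_coset q n x) \<le> card ((\<lambda>k. x * q ^ k mod n) ` {..<m})"
    by (intro card_mono) auto
  also have "\<dots> \<le> m" using card_image_le[of "{..<m}"] by simp
  finally show ?thesis .
qed

lemma cyc_coset_mult_power_subset: "cyc_coset q n (y * q ^ e) \<subseteq> cyc_coset q n y"
proof
  fix z assume "z \<in> cyc_coset q n (y * q ^ e)"
  then obtain k where "z = y * q ^ e * q ^ k mod n" unfolding cyc_coset_def by auto
  then have "z = y * q ^ (e + k) mod n" by (simp add: power_add mult.assoc)
  then show "z \<in> cyc_coset q n y" unfolding cyc_coset_def by blast
qed

lemma card_not_dvd_atLeastAtMost:
  fixes q a :: nat
  assumes "q > 0"
  shows "card {x \<in> {1..a}. \<not> q dvd x} = a - a div q"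
proof -
  have multiples: "{x \<in> {1..a}. q dvd x} = (\<lambda>j. j * q) ` {1..a div q}"
  proof
    show "{x \<in> {1..a}. q dvd x} \<subseteq> (\<lambda>j. j * q) ` {1..a div q}"
    proof clarify
      fix x assume "x \<in> {1..a}" "q dvd x"
      then obtain j where "x = j * q" "1 \<le> j * q" "j * q \<le> a"
        by (auto simp: mult.commute elim!: dvdE)
      then show "x \<in> (\<lambda>j. j * q) ` {1..a div q}"
        using assms by (auto simp: less_eq_div_iff_mult_less_eq intro!: image_eqI[of _ _ j])
    qed
    show "(\<lambda>j. j * q) ` {1..a div q} \<subseteq> {x \<in> {1..a}. q dvd x}"
      using assms by (auto simp: less_eq_div_iff_mult_less_eq)
  qed
  have "{x \<in> {1..a}. \<not> q dvd x} = {1..a} - {x \<in> {1..a}. q dvd x}" by auto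
  also have "card \<dots> = card {1..a} - card {x \<in> {1..a}. q dvd x}"
    by (rule card_Diff_subset) auto
  also have "card {x \<in> {1..a}. q dvd x} = a div q"
    unfolding multiples using assms by (subst card_image) (auto simp: inj_on_def)
  finally show ?thesis by simp
qed

lemma card_bch_defset_le:
  assumes "q \<ge> 2" and "[q ^ m = 1] (mod n)" and "m > 0" and "n > 0"
  shows "card (bch_defset q n \<delta>) \<le> m * ((\<delta> - 1) - (\<delta> - 1) div q)"
proof -
  define T where "T = {x \<in> {1..\<delta> - 1}. \<not> q dvd x}"
  have "bch_defset q n \<delta> \<subseteq> (\<Union>y\<in>T. cyc_coset q n y)"
  proof
    fix z assume "z \<in> bch_defset q n \<delta>"
    then obtain x where x: "x \<in> {1..\<delta> - 1}" "z \<in> cyc_coset q n x" unfolding bch_defset_def by auto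
    obtain y where "x = q ^ multiplicity q x * y" "\<not> q dvd y"
      using multiplicity_decompose'[of x q] x(1) assms(1) by auto
    then obtain e where y: "x = y * q ^ e" "\<not> q dvd y" by (metis mult.commute)
    have "y dvd x" using y(1) by simp
    then have "y \<le> x" using x(1) by (intro dvd_imp_le) auto
    moreover have "y \<noteq> 0" using y(1) x(1) by (intro notI) simp
    ultimately have "y \<in> T" using x(1) y(2) unfolding T_def by auto
    moreover have "z \<in> cyc_coset q n y"
      using x(2) cyc_coset_mult_power_subset[of q n y e] unfolding y(1) by blast
    ultimately show "z \<in> (\<Union>y\<in>T. cyc_coset q n y)" by blast
  qed
  then have "card (bch_defset q n \<delta>) \<le> card (\<Union>y\<in>T. cyc_coset q n y)"
    using finite_subset[OF cyc_coset_subset_lessThan[OF assms(4)]]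
    by (intro card_mono) (auto simp: T_def)
  also have "\<dots> \<le> (\<Sum>y\<in>T. card (cyc_coset q n y))" by (rule card_UN_le) (simp add: T_def)
  also have "\<dots> \<le> (\<Sum>y\<in>T. m)" by (intro sum_mono card_cyc_coset_le assms(2,3))
  also have "\<dots> = m * card T" by simp
  also have "card T = (\<delta> - 1) - (\<delta> - 1) div q"
    unfolding T_def using assms(1) by (intro card_not_dvd_atLeastAtMost) simp
  finally show ?thesis .
qed

lemma diff_div_le_ceiling:
  fixes a q :: nat
  assumes "q > 0"
  shows "a - a div q \<le> nat \<lceil>real a * (1 - 1 / real q)\<rceil>"
proof -
  have "real a = real q * real (a div q) + real (a mod q)"
    by (metis of_nat_add of_nat_mult div_mult_mod_eq mult.commute)
  moreover have "real (a mod q) < real q" using assms by simp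
  ultimately have "real a / real q < real (a div q) + 1" using assms by (simp add: field_simps)
  then have "real (a - a div q) - 1 < real a * (1 - 1 / real q)"
    using div_le_dividend[of a q] by (simp add: of_nat_diff algebra_simps)
  then show ?thesis by linarith
qed

lemma times_mod_in_bch_defset:
  "z \<in> bch_defset q n \<delta> \<Longrightarrow> z * q mod n \<in> bch_defset q n \<delta>"
proof -
  assume "z \<in> bch_defset q n \<delta>"
  then obtain x k where "x \<in> {1..\<delta> - 1}" "z = x * q ^ k mod n"
    unfolding bch_defset_def cyc_coset_def by auto
  moreover have "x * q ^ k mod n * q mod n = x * q ^ Suc k mod n"
    by (simp add: mod_mult_right_eq mult_ac)
  ultimately show "z * q mod n \<in> bch_defset q n \<delta>" unfolding bch_defset_def cyc_coset_def by blast
qed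

lemma inj_on_times_mod:
  fixes q n :: nat
  assumes "coprime q n"
  shows "inj_on (\<lambda>z. z * q mod n) {..<n}"
proof (rule inj_onI)
  fix z z' assume "z \<in> {..<n}" "z' \<in> {..<n}" "z * q mod n = z' * q mod n"
  moreover from this(3) have "[z = z'] (mod n)"
    using assms by (simp add: cong_mult_rcancel_nat flip: cong_def)
  ultimately show "z = z'" by (simp add: cong_def)
qed

lemma bch_gen_frobenius_fixed:
  fixes \<alpha> :: "'b::field"
  assumes "prime CHAR('b)" and "q = CHAR('b) ^ k"
    and "\<alpha> ^ n = 1" and "n > 0" and "coprime q n"
  shows "\<forall>i. coeff (bch_gen q n \<alpha> \<delta>) i ^ q = coeff (bch_gen q n \<alpha> \<delta>) i"
proof -
  let ?Z = "bch_defset q n \<delta>"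
  have "q > 0" using assms(1,2) prime_gt_0_nat by simp
  have Z_lt: "?Z \<subseteq> {..<n}" using bch_defset_subset_lessThan[OF assms(4)] .
  have inj: "inj_on (\<lambda>z. z * q mod n) ?Z"
    using inj_on_subset[OF inj_on_times_mod[OF assms(5)] Z_lt] .
  have "(\<alpha> ^ z) ^ q = \<alpha> ^ (z * q mod n)" for z
    using power_mod_exponent[OF assms(3)] by (simp add: power_mult)
  then have "map_poly (\<lambda>x. x ^ q) (bch_gen q n \<alpha> \<delta>) = (\<Prod>z\<in>?Z. [:- (\<alpha> ^ (z * q mod n)), 1:])"
    unfolding bch_gen_def
    by (simp add: map_poly_frobenius_prod[OF assms(1,2)] map_poly_frobenius_linear[OF assms(1,2)])
  also have "\<dots> = (\<Prod>z\<in>(\<lambda>z. z * q mod n) ` ?Z. [:- (\<alpha> ^ z), 1:])"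
    by (simp add: prod.reindex[OF inj])
  also have "(\<lambda>z. z * q mod n) ` ?Z = ?Z"
    using finite_bch_defset[OF assms(4)] times_mod_in_bch_defset inj by (intro endo_inj_surj) auto
  finally have "map_poly (\<lambda>x. x ^ q) (bch_gen q n \<alpha> \<delta>) = bch_gen q n \<alpha> \<delta>"
    unfolding bch_gen_def .
  with \<open>q > 0\<close> show ?thesis by (simp add: map_poly_power_eq_self_iff)
qed

section \<open>Primitive narrow-sense BCH codes\<close>

lemma min_dist_le_hweight: "c \<in> C \<Longrightarrow> c \<noteq> 0 \<Longrightarrow> min_dist C \<le> hweight c"
  unfolding min_dist_def by (rule Least_le) blast

lemma min_dist_ge:
  assumes "\<And>c. c \<in> C \<Longrightarrow> c \<noteq> 0 \<Longrightarrow> w \<le> hweight c" and "c \<in> C" and "c \<noteq> 0"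
  shows "w \<le> min_dist C"
proof -
  have "\<exists>w. \<exists>c\<in>C. c \<noteq> 0 \<and> hweight c = w" using assms(2,3) by blast
  from LeastI_ex[OF this] obtain c' where "c' \<in> C" "c' \<noteq> 0" "hweight c' = min_dist C"
    unfolding min_dist_def by blast
  then show ?thesis using assms(1) by metis
qed

locale bch_field =
  fixes q m :: nat and \<alpha> :: "'b::{field,finite}"
  assumes primepow: "primepow q"
    and card_field: "card (UNIV :: 'b set) = q ^ m"
    and primitive: "primitive_elem \<alpha>"
    and field_gt_2: "2 < q ^ m" \<comment> \<open>over F_2, 0 is primitive in the sense of primitive_elem\<close>
begin

abbreviation n :: nat where "n \<equiv> q ^ m - 1"

lemma q_ge_2: "2 \<le> q"
  using primepow_gt_Suc_0[OF primepow] by simp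

lemma m_pos: "m > 0"
  using field_gt_2 by (cases m) auto

lemma n_ge_2: "2 \<le> n"
  using field_gt_2 by simp

lemma prime_CHAR: "prime CHAR('b)"
  by (simp add: prime_CHAR_semidom finite_imp_CHAR_pos)

lemma q_CHAR_power: "\<exists>k. q = CHAR('b) ^ k"
proof -
  obtain p k where p: "prime p" "q = p ^ k" using primepow unfolding primepow_def by blast
  have "CHAR('b) dvd p ^ (k * m)"
    using CHAR_dvd_CARD[where 'a='b] card_field p by (simp add: power_mult)
  then have "CHAR('b) = p" using prime_CHAR p(1) prime_dvd_power primes_dvd_imp_eq by blast
  with p show ?thesis by blast
qed

lemma alpha_nonzero: "\<alpha> \<noteq> 0"
  using primitive_elem_nonzero[OF primitive] card_field field_gt_2 by simp

lemma alpha_power_n: "\<alpha> ^ n = 1"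
  using field_power_card_pred[OF alpha_nonzero] card_field by simp

lemma inj_on_alpha_powers: "inj_on (\<lambda>i. \<alpha> ^ i) {..<n}"
  using inj_on_primitive_elem_powers[OF primitive alpha_nonzero] card_field by simp

lemma q_power_m_eq: "q ^ m = n + 1"
  using field_gt_2 by simp

lemma q_power_m_cong_1: "[q ^ m = 1] (mod n)"
proof -
  have "[n + 1 = 1] (mod n)" unfolding cong_def by (rule mod_add_self1)
  then show ?thesis unfolding q_power_m_eq[symmetric] .
qed

lemma coprime_q_n: "coprime q n"
proof -
  have "coprime (n + 1) n" by simp
  then have "coprime (q ^ m) n" unfolding q_power_m_eq[symmetric] .
  then show ?thesis using m_pos by simp
qed

lemma card_Fq: "card {x :: 'b. x ^ q = x} = q"
proof (rule card_frobenius_fixed[OF primitive alpha_nonzero q_ge_2])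
  have "[1 * (q - 1) + 1 = 1] (mod (q - 1))" by (rule cong_le_nat[THEN iffD2]) auto
  then have "[q = 1] (mod (q - 1))" using q_ge_2 by simp
  then have "(q - 1) dvd (q ^ m - 1)" using cong_pow cong_to_1_nat by (metis power_one)
  then show "(q - 1) dvd (card (UNIV :: 'b set) - 1)" by (simp only: card_field)
qed

lemma bch_code_subset_poly_words: "bch_code q n \<alpha> \<delta> \<subseteq> poly_words {x. x ^ q = x} n"
  unfolding bch_code_def poly_words_def by (auto intro: coeff_eq_0 le_less_trans)

lemma bch_code_diff:
  assumes "c \<in> bch_code q n \<alpha> \<delta>" and "c' \<in> bch_code q n \<alpha> \<delta>"
  shows "c - c' \<in> bch_code q n \<alpha> \<delta>"
proof -
  obtain k where "q = CHAR('b) ^ k" using q_CHAR_power by blast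
  then show ?thesis using assms degree_diff_le_max[of c c']
    unfolding bch_code_def by (auto simp: frobenius_diff[OF prime_CHAR] intro: dvd_diff)
qed

lemma poly_bch_code_root:
  assumes "c \<in> bch_code q n \<alpha> \<delta>" and "z \<in> bch_defset q n \<delta>"
  shows "poly c (\<alpha> ^ z) = 0"
proof -
  have "finite (bch_defset q n \<delta>)" using finite_bch_defset n_ge_2 by simp
  then have "poly (bch_gen q n \<alpha> \<delta>) (\<alpha> ^ z) = 0"
    unfolding bch_gen_def poly_prod using assms(2) by (subst prod_zero_iff) auto
  moreover have "bch_gen q n \<alpha> \<delta> dvd c" using assms(1) unfolding bch_code_def by simp
  ultimately show ?thesis by (auto elim: dvdE)
qed

lemma bch_code_hweight_gt:
  assumes "{1..w} \<subseteq> bch_defset q n \<delta>" and "c \<in> bch_code q n \<alpha> \<delta>" and "c \<noteq> 0"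
  shows "w < hweight c"
proof (rule bch_bound[OF assms(3) alpha_nonzero])
  have "{i. coeff c i \<noteq> 0} \<subseteq> {..<n}"
    using assms(2) le_degree unfolding bch_code_def by fastforce
  then show "inj_on (\<lambda>i. \<alpha> ^ i) {i. coeff c i \<noteq> 0}"
    using inj_on_alpha_powers inj_on_subset by blast
  show "poly c (\<alpha> ^ j) = 0" if "j \<in> {1..w}" for j
    using poly_bch_code_root[OF assms(2)] assms(1) that by blast
qed

lemma consecutive_subset_bch_defset:
  assumes "\<delta> \<le> n"
  shows "{1..\<delta> - 1} \<subseteq> bch_defset q n \<delta>"
proof
  fix j assume j: "j \<in> {1..\<delta> - 1}"
  then have "1 \<le> j" "j \<le> \<delta> - 1" by auto
  with assms have "j < n" by linarith
  then have "j = j * q ^ 0 mod n" by simp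
  then have "j \<in> cyc_coset q n j" unfolding cyc_coset_def by blast
  then show "j \<in> bch_defset q n \<delta>" using j unfolding bch_defset_def by blast
qed

lemma consecutive_subset_bch_defset_dvd:
  assumes "q dvd \<delta>" and "2 \<le> \<delta>" and "\<delta> \<le> n"
  shows "{1..\<delta>} \<subseteq> bch_defset q n \<delta>"
proof -
  obtain d where d: "\<delta> = d * q" using assms(1) by (metis dvd_def mult.commute)
  have "\<delta> \<noteq> n"
  proof
    assume "\<delta> = n"
    have "q dvd n + 1" unfolding q_power_m_eq[symmetric] using m_pos by (simp add: dvd_power)
    moreover have "q dvd n" using assms(1) \<open>\<delta> = n\<close> by simp
    ultimately have "q dvd 1" by (metis dvd_add_right_iff)
    then show False using q_ge_2 by simp
  qed
  with assms(3) have "\<delta> = d * q ^ 1 mod n" using d by simp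
  moreover have "d \<in> {1..\<delta> - 1}"
  proof -
    have "d \<noteq> 0" using d assms(2) by (intro notI) simp
    moreover have "d < \<delta>" unfolding d using \<open>d \<noteq> 0\<close> q_ge_2 by simp
    ultimately show ?thesis by simp
  qed
  ultimately have "\<delta> \<in> bch_defset q n \<delta>" unfolding bch_defset_def cyc_coset_def by blast
  moreover have "{1..\<delta>} = insert \<delta> {1..\<delta> - 1}" using assms(2) by auto
  ultimately show ?thesis using consecutive_subset_bch_defset[OF assms(3)] by simp
qed

lemma card_bch_defset_le_n: "card (bch_defset q n \<delta>) \<le> n"
  using card_mono[OF finite_lessThan bch_defset_subset_lessThan] n_ge_2 by simp

lemma card_bch_code_ge: "q ^ (n - card (bch_defset q n \<delta>)) \<le> card (bch_code q n \<alpha> \<delta>)"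
proof -
  let ?Z = "bch_defset q n \<delta>" and ?g = "bch_gen q n \<alpha> \<delta>" and ?F = "{x :: 'b. x ^ q = x}"
  obtain k where q_CHAR: "q = CHAR('b) ^ k" using q_CHAR_power by blast
  have "finite ?Z" using finite_bch_defset n_ge_2 by simp
  then have "?g \<noteq> 0" unfolding bch_gen_def by (simp add: prod_zero_iff)
  have "degree ?g \<le> card ?Z"
    using degree_prod_sum_le[OF \<open>finite ?Z\<close>, of "\<lambda>z. [:- (\<alpha> ^ z), 1:]"]
    by (simp add: bch_gen_def o_def)
  have "?g * h \<in> bch_code q n \<alpha> \<delta>" if h: "h \<in> poly_words ?F (n - card ?Z)" for h
  proof -
    have "degree (?g * h) < n"
    proof (cases "h = 0")
      case False
      then have "degree h < n - card ?Z" using poly_words_degree_less[OF h] by simp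
      then show ?thesis using \<open>degree ?g \<le> card ?Z\<close> card_bch_defset_le_n \<open>?g \<noteq> 0\<close> False
        by (simp add: degree_mult_eq)
    qed (use n_ge_2 in simp)
    moreover have "\<forall>i. coeff (?g * h) i ^ q = coeff (?g * h) i"
      using frobenius_fixed_coeff_mult[OF prime_CHAR q_CHAR] h n_ge_2
        bch_gen_frobenius_fixed[OF prime_CHAR q_CHAR alpha_power_n _ coprime_q_n]
      unfolding poly_words_def by simp
    ultimately show ?thesis unfolding bch_code_def by simp
  qed
  then have "(\<lambda>h. ?g * h) ` poly_words ?F (n - card ?Z) \<subseteq> bch_code q n \<alpha> \<delta>" by blast
  moreover have "inj_on (\<lambda>h. ?g * h) (poly_words ?F (n - card ?Z))"
    using \<open>?g \<noteq> 0\<close> by (auto simp: inj_on_def)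
  moreover have "finite (bch_code q n \<alpha> \<delta>)"
    using q_ge_2 by (intro finite_subset[OF bch_code_subset_poly_words finite_poly_words]) auto
  ultimately have "card (poly_words ?F (n - card ?Z)) \<le> card (bch_code q n \<alpha> \<delta>)"
    using card_inj_on_le by blast
  then show ?thesis using q_ge_2 by (simp add: card_poly_words card_Fq)
qed

lemma bch_code_hamming_bound:
  assumes "q ^ card (bch_defset q n \<delta>) < (\<Sum>i=0..t. (n choose i) * (q - 1) ^ i)"
  shows "\<exists>c\<in>bch_code q n \<alpha> \<delta>. c \<noteq> 0 \<and> hweight c \<le> 2 * t"
proof (rule ccontr)
  assume "\<not> ?thesis"
  then have heavy: "2 * t < hweight (c - c')"
    if "c \<in> bch_code q n \<alpha> \<delta>" "c' \<in> bch_code q n \<alpha> \<delta>" "c \<noteq> c'" for c c'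
    using bch_code_diff[OF that(1,2)] that(3) by (metis not_le right_minus_eq)
  let ?Z = "bch_defset q n \<delta>" and ?F = "{x :: 'b. x ^ q = x}"
  obtain k where q_CHAR: "q = CHAR('b) ^ k" using q_CHAR_power by blast
  have "0 \<in> ?F" using q_ge_2 by simp
  have "x + y \<in> ?F" if "x \<in> ?F" "y \<in> ?F" for x y
    using that freshmans_dream'[OF prime_CHAR q_CHAR, of x y] by simp
  then have "card (bch_code q n \<alpha> \<delta>) * card {e \<in> poly_words ?F n. hweight e \<le> t} \<le> card ?F ^ n"
    by (intro hamming_bound[OF _ \<open>0 \<in> ?F\<close> _ bch_code_subset_poly_words heavy]) auto
  then have "card (bch_code q n \<alpha> \<delta>) * (\<Sum>i=0..t. (n choose i) * (q - 1) ^ i) \<le> q ^ n"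
    using card_poly_words_hweight_le[OF _ \<open>0 \<in> ?F\<close>] by (simp add: card_Fq)
  then have "q ^ (n - card ?Z) * (\<Sum>i=0..t. (n choose i) * (q - 1) ^ i) \<le> q ^ n"
    using card_bch_code_ge mult_le_mono1 order.trans by blast
  also have "q ^ n = q ^ (n - card ?Z) * q ^ card ?Z"
    by (simp only: le_add_diff_inverse2[OF card_bch_defset_le_n] flip: power_add)
  finally show False using assms q_ge_2 by simp
qed

lemma card_bch_defset_le_ceiling:
  "card (bch_defset q n \<delta>) \<le> m * nat \<lceil>real (\<delta> - 1) * (1 - 1 / real q)\<rceil>"
proof -
  have "card (bch_defset q n \<delta>) \<le> m * ((\<delta> - 1) - (\<delta> - 1) div q)"
    using card_bch_defset_le[OF q_ge_2 q_power_m_cong_1 m_pos] n_ge_2 by simp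
  also have "\<dots> \<le> m * nat \<lceil>real (\<delta> - 1) * (1 - 1 / real q)\<rceil>"
    using q_ge_2 by (intro mult_le_mono2 diff_div_le_ceiling) simp
  finally show ?thesis .
qed

end

theorem mainTheorem7:
  fixes \<alpha> :: "'b::{field,finite}" and q m \<delta> :: nat
  assumes "primepow q" and "m > 0" and "card (UNIV :: 'b set) = q ^ m"
    and "primitive_elem \<alpha>"
    and "2 \<le> \<delta>" and "\<delta> \<le> q ^ ((m + 1) div 2) + 1" and "\<delta> \<le> q ^ m - 1"
    and "(\<Sum>i=0..(\<delta> + 1) div 2. ((q ^ m - 1) choose i) * (q - 1) ^ i)
           > q ^ (m * nat \<lceil>real (\<delta> - 1) * (1 - 1 / real q)\<rceil>)"
  shows "min_dist (bch_code q (q ^ m - 1) \<alpha> \<delta>) \<in> {\<delta>, \<delta> + 1}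
    \<and> (\<delta> mod q = 0 \<longrightarrow> min_dist (bch_code q (q ^ m - 1) \<alpha> \<delta>) = \<delta> + 1)"
proof -
  interpret bch_field q m \<alpha> using assms(1,3,4,5,7) by unfold_locales auto
  let ?C = "bch_code q n \<alpha> \<delta>"
  have "q ^ card (bch_defset q n \<delta>) \<le> q ^ (m * nat \<lceil>real (\<delta> - 1) * (1 - 1 / real q)\<rceil>)"
    using card_bch_defset_le_ceiling q_ge_2 by (intro power_increasing) auto
  then obtain c where c: "c \<in> ?C" "c \<noteq> 0" "hweight c \<le> 2 * ((\<delta> + 1) div 2)"
    using bch_code_hamming_bound assms(8) le_less_trans by blast
  have "min_dist ?C \<le> \<delta> + 1" using min_dist_le_hweight[OF c(1,2)] c(3) by presburger
  moreover have "\<delta> \<le> min_dist ?C"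
  proof (rule min_dist_ge[OF _ c(1,2)])
    show "\<delta> \<le> hweight c'" if "c' \<in> ?C" "c' \<noteq> 0" for c'
      using bch_code_hweight_gt[OF consecutive_subset_bch_defset[OF assms(7)] that] by linarith
  qed
  moreover have "\<delta> + 1 \<le> min_dist ?C" if "q dvd \<delta>"
    using bch_code_hweight_gt[OF consecutive_subset_bch_defset_dvd[OF that assms(5,7)]]
    by (intro min_dist_ge[OF _ c(1,2)]) (simp add: Suc_le_eq)
  ultimately show ?thesis by auto
qed

end
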